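(* If $W$ is a non-empty null-homotopic closed walk, then at least two segments of $W$ are retractable.
   Context: A closed walk in a simple graph is a cyclic sequence $u_1,\ldots,u_m$ of vertices with $u_iu_{i+1}$ an edge for $i<m$ and $u_mu_1$ an edge. A segment is a cyclically consecutive triple $u_iu_{i+1}u_{i+2}$ (indices mod $m$); it is retractable if $u_i=u_{i+2}$, and deleting $u_{i+1}$ and $u_{i+2}$ is a one-step retraction (for a closed walk of length two the result is the empty walk). The topological retract is obtained by performing one-step retractions as long as possible (it is unique). A closed walk is null-homotopic if its topological retract is empty. *)

theory Defs
  imports Main
begin

text \<open>A simple graph is given by a symmetric, irreflexive edge relation E.
  A closed walk u_1,...,u_m is represented by the list [u_1,...,u_m];
  positions are taken cyclically (mod m).\<close>

definition simple_graph :: "('a \<Rightarrow> 'a \<Rightarrow> bool) \<Rightarrow> bool" where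
  "simple_graph E \<longleftrightarrow> (\<forall>x y. E x y \<longrightarrow> E y x) \<and> (\<forall>x. \<not> E x x)"

definition closed_walk :: "('a \<Rightarrow> 'a \<Rightarrow> bool) \<Rightarrow> 'a list \<Rightarrow> bool" where
  "closed_walk E w \<longleftrightarrow>
     (\<forall>i < length w. E (w ! i) (w ! ((i + 1) mod length w)))"

text \<open>The segment starting at position i is w!i, w!(i+1), w!(i+2) (indices mod m);
  it is retractable iff its first and last vertex coincide.\<close>

definition retractable_segment :: "'a list \<Rightarrow> nat \<Rightarrow> bool" where
  "retractable_segment w i \<longleftrightarrow>
     i < length w \<and> w ! i = w ! ((i + 2) mod length w)"

text \<open>One-step retraction at a retractable segment i: delete the vertices at
  positions (i+1) mod m and (i+2) mod m.  For m = 2 this gives the empty walk.\<close>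

definition one_step_retraction :: "'a list \<Rightarrow> 'a list \<Rightarrow> bool" where
  "one_step_retraction w w' \<longleftrightarrow>
     (\<exists>i. 2 \<le> length w \<and> retractable_segment w i \<and>
        w' = map (\<lambda>j. w ! j)
               (filter (\<lambda>j. j \<noteq> (i + 1) mod length w \<and> j \<noteq> (i + 2) mod length w)
                  [0..<length w]))"

text \<open>The topological retract is obtained by performing one-step retractions
  as long as possible (it is unique); the walk is null-homotopic iff it is empty,
  i.e. iff some sequence of one-step retractions reaches the empty walk
  (the empty walk admits no further retraction).\<close>

definition null_homotopic :: "'a list \<Rightarrow> bool" where
  "null_homotopic w \<longleftrightarrow> one_step_retraction\<^sup>*\<^sup>* w []"

end

theory Submission
  imports Defs
begin

text \<open>Induct along a sequence of one-step retractions ending in the empty walk. A walk of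
  length two has both of its segments retractable. Otherwise, after a rotation the walk reads
  \<open>u @ [hd u, c]\<close> and its retract is a rotation of \<open>u\<close>; rotations do not change the number
  of retractable segments. Of the at least two retractable segments of \<open>u\<close>, one does not start
  at the last position of \<open>u\<close>, and it stays retractable in \<open>u @ [hd u, c]\<close> because the copy
  of \<open>hd u\<close> closes the wrap-around; the segment starting at that copy is a second one.\<close>

lemma map_nth_upt: "j \<le> length w \<Longrightarrow> map ((!) w) [i..<j] = take (j - i) (drop i w)"
  by (simp add: list_eq_iff_nth_eq)

lemma mod_less_double: "a < 2 * m \<Longrightarrow> a mod m = (if a < m then a else a - (m::nat))"
  by (simp add: le_mod_geq)

lemma inj_on_add_mod: "inj_on (\<lambda>j. (k + j) mod m) {..<m::nat}"
proof (rule inj_onI)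
  fix i j assume "i \<in> {..<m}" "j \<in> {..<m}" and eq: "(k + i) mod m = (k + j) mod m"
  then have i: "i < m" and j: "j < m" by auto
  define c where "c = k mod m"
  have "c < m" using i c_def by simp
  have "(c + i) mod m = (c + j) mod m"
    using eq by (simp add: c_def mod_add_left_eq)
  moreover have "(c + i) mod m = (if c + i < m then c + i else c + i - m)"
    using \<open>c < m\<close> i by (intro mod_less_double) simp
  moreover have "(c + j) mod m = (if c + j < m then c + j else c + j - m)"
    using \<open>c < m\<close> j by (intro mod_less_double) simp
  ultimately show "i = j" using i j by (simp split: if_splits)
qed

lemma map_nth_filter_upt_cyclic_pair:
  assumes "a < length w" and "2 \<le> length w"
  obtains r where "map ((!) w) (filter (\<lambda>j. j \<noteq> a \<and> j \<noteq> Suc a mod length w) [0..<length w])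
    = rotate r (drop 2 (rotate a w))"
proof -
  define m where "m = length w"
  have rot: "rotate a w = drop a w @ take a w"
    using assms(1) by (simp add: rotate_drop_take)
  have split: "[0..<m] = [0..<a] @ [a..<m]"
    using upt_add_eq_append[of 0 a "m - a"] assms(1) m_def by simp
  show thesis
  proof (cases "Suc a < m")
    case True
    have "[a..<m] = a # Suc a # [Suc (Suc a)..<m]"
      using True by (simp add: upt_conv_Cons)
    then have "filter (\<lambda>j. j \<noteq> a \<and> j \<noteq> Suc a mod m) [0..<m] = [0..<a] @ [Suc (Suc a)..<m]"
      using True split by (auto intro!: filter_True)
    then have "map ((!) w) (filter (\<lambda>j. j \<noteq> a \<and> j \<noteq> Suc a mod m) [0..<m])
        = take a w @ drop (Suc (Suc a)) w"
      using True unfolding m_def by (simp add: map_nth_upt)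
    also have "\<dots> = rotate (length (drop (Suc (Suc a)) w)) (drop (Suc (Suc a)) w @ take a w)"
      by (rule rotate_append[symmetric])
    also have "drop (Suc (Suc a)) w @ take a w = drop 2 (rotate a w)"
      using True unfolding rot m_def by simp
    finally show thesis using that m_def by blast
  next
    case False
    then have a: "Suc a = m" using assms(1) m_def by simp
    have "[0..<m] = 0 # [1..<a] @ [a]"
      using split a assms(2) m_def by (simp add: upt_conv_Cons)
    then have "filter (\<lambda>j. j \<noteq> a \<and> j \<noteq> Suc a mod m) [0..<m] = [1..<a]"
      using a by (auto intro!: filter_True)
    then have "map ((!) w) (filter (\<lambda>j. j \<noteq> a \<and> j \<noteq> Suc a mod m) [0..<m]) = drop 1 (take a w)"
      using a unfolding m_def by (simp add: drop_take map_nth_upt)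
    also have "\<dots> = rotate 0 (drop 2 (rotate a w))"
      using a unfolding rot m_def by (simp add: Cons_nth_drop_Suc)
    finally show thesis using that m_def by blast
  qed
qed

definition retractable_segments :: "'a list \<Rightarrow> nat set" where
  "retractable_segments w = {i. retractable_segment w i}"

lemma retractable_segment_rotate:
  assumes "i < length w"
  shows "retractable_segment (rotate k w) i \<longleftrightarrow> retractable_segment w ((k + i) mod length w)"
proof -
  have "0 < length w"
    using assms by linarith
  then have "rotate k w ! ((i + 2) mod length w) = w ! ((k + (i + 2) mod length w) mod length w)"
    by (intro nth_rotate mod_less_divisor)
  also have "\<dots> = w ! (((k + i) mod length w + 2) mod length w)"
    by (simp add: mod_simps add.assoc)
  finally show ?thesis
    using assms \<open>0 < length w\<close> by (simp add: retractable_segment_def nth_rotate)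
qed

lemma card_retractable_segments_rotate_le:
  "card (retractable_segments (rotate k w)) \<le> card (retractable_segments w)"
proof (rule card_inj_on_le)
  show "inj_on (\<lambda>j. (k + j) mod length w) (retractable_segments (rotate k w))"
    by (rule inj_on_subset[OF inj_on_add_mod]) (auto simp: retractable_segments_def retractable_segment_def)
  show "(\<lambda>j. (k + j) mod length w) ` retractable_segments (rotate k w) \<subseteq> retractable_segments w"
  proof (rule image_subsetI)
    fix j assume "j \<in> retractable_segments (rotate k w)"
    then have j: "retractable_segment (rotate k w) j"
      by (simp add: retractable_segments_def)
    then have "j < length w"
      by (simp add: retractable_segment_def)
    with j show "(k + j) mod length w \<in> retractable_segments w"
      by (simp add: retractable_segments_def retractable_segment_rotate)
  qed
  show "finite (retractable_segments w)"
    by (simp add: retractable_segments_def retractable_segment_def)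
qed

lemma card_retractable_segments_rotate:
  "card (retractable_segments (rotate k w)) = card (retractable_segments w)"
proof (rule antisym)
  have "rotate (length w - k mod length w) (rotate k w)
      = rotate (length w - k mod length w + k mod length w) w"
    by (simp add: rotate_rotate rotate_conv_mod[of k w])
  also have "\<dots> = w"
    by (cases "w = []") simp_all
  finally have "rotate (length w - k mod length w) (rotate k w) = w" .
  then show "card (retractable_segments w) \<le> card (retractable_segments (rotate k w))"
    by (metis card_retractable_segments_rotate_le)
qed (rule card_retractable_segments_rotate_le)

lemma two_le_card_retractable_segments_append:
  assumes "2 \<le> card (retractable_segments u)"
  shows "2 \<le> card (retractable_segments (u @ [hd u, c]))"
proof -
  define n where "n = length u"
  define x where "x = u @ [hd u, c]"
  have "\<not> retractable_segments u \<subseteq> {n - 1}"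
    using assms card_mono[of "{n - 1}" "retractable_segments u"] by auto
  then obtain t where "retractable_segment u t" and "t \<noteq> n - 1"
    by (auto simp: retractable_segments_def)
  then have "t + 2 \<le> n" and u_t: "u ! t = u ! ((t + 2) mod n)"
    by (auto simp: retractable_segment_def n_def)
  then have "u \<noteq> []"
    by (auto simp: n_def)
  have x_nth: "x ! j = u ! (j mod n)" if "j \<le> n" for j
  proof (cases "j < n")
    case True
    then show ?thesis by (simp add: x_def n_def nth_append)
  next
    case False
    with that \<open>u \<noteq> []\<close> show ?thesis by (simp add: x_def n_def nth_append hd_conv_nth)
  qed
  have "length x = n + 2"
    by (simp add: x_def n_def)
  have "retractable_segment x t"
    using \<open>t + 2 \<le> n\<close> u_t x_nth[of t] x_nth[of "t + 2"]
    by (simp add: retractable_segment_def \<open>length x = n + 2\<close>)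
  moreover have "retractable_segment x n"
    using x_nth[of n] x_nth[of 0] by (simp add: retractable_segment_def \<open>length x = n + 2\<close>)
  moreover have "finite (retractable_segments x)"
    by (simp add: retractable_segments_def retractable_segment_def)
  ultimately have "card {t, n} \<le> card (retractable_segments x)"
    by (intro card_mono) (auto simp: retractable_segments_def)
  with \<open>t + 2 \<le> n\<close> show ?thesis
    by (simp add: x_def)
qed

lemma one_step_retraction_eq_rotate_drop:
  assumes "one_step_retraction w w'"
  obtains i r where "2 \<le> length w" and "retractable_segment w i"
    and "w' = rotate r (drop 2 (rotate (Suc i) w))"
proof -
  obtain i where "2 \<le> length w" and seg: "retractable_segment w i"
    and w': "w' = map ((!) w)
      (filter (\<lambda>j. j \<noteq> (i + 1) mod length w \<and> j \<noteq> (i + 2) mod length w) [0..<length w])"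
    using assms unfolding one_step_retraction_def by blast
  have "Suc i mod length w < length w"
    using \<open>2 \<le> length w\<close> by (intro mod_less_divisor) linarith
  then obtain r where "map ((!) w) (filter (\<lambda>j. j \<noteq> Suc i mod length w
        \<and> j \<noteq> Suc (Suc i mod length w) mod length w) [0..<length w])
      = rotate r (drop 2 (rotate (Suc i mod length w) w))"
    using \<open>2 \<le> length w\<close> by (rule map_nth_filter_upt_cyclic_pair)
  moreover have "Suc (Suc i mod length w) mod length w = (i + 2) mod length w"
    by (simp add: mod_Suc_eq)
  ultimately have "w' = rotate r (drop 2 (rotate (Suc i mod length w) w))"
    using w' by simp
  then have "w' = rotate r (drop 2 (rotate (Suc i) w))"
    by (simp only: rotate_conv_mod[symmetric])
  with \<open>2 \<le> length w\<close> seg show thesis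
    using that by blast
qed

lemma one_step_retraction_nonempty_rotate:
  assumes "one_step_retraction w w'" and "w' \<noteq> []"
  obtains k u c r where "rotate k w = u @ [hd u, c]" and "w' = rotate r u"
proof -
  obtain i r where seg: "retractable_segment w i"
    and w': "w' = rotate r (drop 2 (rotate (Suc i) w))"
    using assms(1) by (rule one_step_retraction_eq_rotate_drop)
  define y where "y = rotate (Suc i) w"
  have "length w' = length y - 2" and "length w' \<noteq> 0"
    using w' assms(2) by (simp_all add: y_def)
  then have "3 \<le> length y"
    by simp
  then obtain c b v where cbv: "y = c # b # v" and "v \<noteq> []"
    by (cases y rule: remdups_adj.cases) (auto simp: Suc_le_eq)
  have "i < length w"
    using seg by (simp add: retractable_segment_def)
  then have "Suc i + (length w - 1) = i + length w" and "length w - 1 < length w"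
    by linarith+
  then have "(Suc i + (length w - 1)) mod length w = i"
    using \<open>i < length w\<close> by simp
  then have "retractable_segment y (length w - 1)"
    using seg \<open>length w - 1 < length w\<close> retractable_segment_rotate[of "length w - 1" w "Suc i"]
    by (simp only: y_def)
  moreover have "length w = length v + 2"
    using cbv length_rotate[of "Suc i" w] by (simp add: y_def)
  ultimately have "last v = b"
    using cbv \<open>v \<noteq> []\<close> by (simp add: retractable_segment_def last_conv_nth mod_Suc)
  \<comment> \<open>As \<open>w ! i = w ! (i + 2)\<close>, deleting \<open>w ! i\<close>, \<open>w ! (i + 1)\<close> instead leaves the same cyclic
    sequence; \<open>u\<close> is that sequence read from position \<open>i + 2\<close>.\<close>
  define u where "u = b # butlast v"
  have bv: "b # v = u @ [hd u]"
    using \<open>v \<noteq> []\<close> by (simp add: u_def flip: \<open>last v = b\<close>)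
  have "rotate (Suc (Suc i)) w = rotate1 y"
    by (simp add: y_def)
  also have "\<dots> = u @ [hd u, c]"
    using cbv bv by simp
  finally have "rotate (Suc (Suc i)) w = u @ [hd u, c]" .
  moreover have "w' = rotate (Suc r) u"
  proof -
    have "w' = rotate r (drop 2 y)"
      using w' by (simp only: y_def)
    also have "drop 2 y = rotate1 u"
      using cbv bv by (simp add: u_def)
    finally show ?thesis
      by (simp add: rotate1_rotate_swap)
  qed
  ultimately show thesis
    using that by blast
qed

lemma card_retractable_segments_length_2:
  assumes "length w = 2"
  shows "card (retractable_segments w) = 2"
proof -
  have "retractable_segments w = {0, 1}"
    using assms by (auto simp: retractable_segments_def retractable_segment_def)
  then show ?thesis
    by simp
qed

lemma null_homotopic_two_le_card_retractable_segments:
  assumes "null_homotopic w" and "w \<noteq> []"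
  shows "2 \<le> card (retractable_segments w)"
  using assms unfolding null_homotopic_def
proof (induction rule: converse_rtranclp_induct)
  case base
  then show ?case by simp
next
  case (step w w')
  show ?case
  proof (cases "w' = []")
    case True
    obtain i r where "2 \<le> length w" and "w' = rotate r (drop 2 (rotate (Suc i) w))"
      using step.hyps(1) by (rule one_step_retraction_eq_rotate_drop)
    with True have "length w = 2"
      by simp
    then show ?thesis
      by (simp add: card_retractable_segments_length_2)
  next
    case False
    obtain k u c r where k: "rotate k w = u @ [hd u, c]" and "w' = rotate r u"
      using step.hyps(1) False by (rule one_step_retraction_nonempty_rotate)
    with False step.IH have "2 \<le> card (retractable_segments u)"
      by (simp add: card_retractable_segments_rotate)
    then have "2 \<le> card (retractable_segments (rotate k w))"
      unfolding k by (rule two_le_card_retractable_segments_append)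
    then show ?thesis
      by (simp add: card_retractable_segments_rotate)
  qed
qed

theorem mainTheorem13:
  fixes E :: "'a \<Rightarrow> 'a \<Rightarrow> bool" and W :: "'a list"
  assumes "simple_graph E"
    and "closed_walk E W"
    and "W \<noteq> []"
    and "null_homotopic W"
  shows "card {i. i < length W \<and> retractable_segment W i} \<ge> 2"
proof -
  have "{i. i < length W \<and> retractable_segment W i} = retractable_segments W"
    by (auto simp: retractable_segments_def retractable_segment_def)
  with null_homotopic_two_le_card_retractable_segments[OF assms(4,3)] show ?thesis
    by simp
qed

end
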